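(* For every integer $k > 1$, $\lfloor \log_2 (k-1) \rfloor \leq \operatorname{VCdim}(\mathcal{H}^k) \leq k$.
   Context: For $\sigma \in \{0,1\}^k$, let $h_\sigma$ be the classifier on binary strings with $h_\sigma(s) = 1$ iff $\sigma$ is a subsequence of $s$ (there exist indices $i_1 < \dots < i_k$ with $s_{i_j} = \sigma_j$), and $0$ otherwise. $\mathcal{H}^k = \{h_\sigma : \sigma \in \{0,1\}^k\}$, viewed as a hypothesis class on the set of all finite binary strings. A set $B$ of strings is shattered by $\mathcal{H}^k$ if for every $B' \subseteq B$ there is $h \in \mathcal{H}^k$ with $B \cap h^{-1}(1) = B'$; $\operatorname{VCdim}(\mathcal{H}^k)$ is the largest size of a shattered set. *)

theory Defs
  imports "HOL-Library.Sublist" "HOL-Library.Extended_Nat" Complex_Main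
begin

definition h :: "bool list \<Rightarrow> bool list \<Rightarrow> bool" where
  "h \<sigma> s \<longleftrightarrow> subseq \<sigma> s"

definition Hk :: "nat \<Rightarrow> (bool list \<Rightarrow> bool) set" where
  "Hk k = {h \<sigma> | \<sigma>. length \<sigma> = k}"

definition shatters :: "('a \<Rightarrow> bool) set \<Rightarrow> 'a set \<Rightarrow> bool" where
  "shatters H B \<longleftrightarrow> (\<forall>B' \<subseteq> B. \<exists>f \<in> H. B \<inter> {x. f x} = B')"

definition VCdim :: "('a \<Rightarrow> bool) set \<Rightarrow> enat" where
  "VCdim H = Sup {enat (card B) | B. finite B \<and> shatters H B}"

end

theory Submission
  imports Defs
begin

text \<open>
  Upper bound: H^k has at most 2^k members, while shattering a set B takes 2^|B| of them.

  Lower bound: a word with exactly n zeros has n + 1 gaps (before, between and after its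
  zeros), and it contains 0^a 1 0^(n-a) as a subsequence iff its gap a holds a one. Taking
  n = k - 1, the k probes 0^a 1 0^(k-1-a) each read off one gap. If 2^m <= k, give every subset
  S of {0..<m} its own gap; the i-th word puts a one into the gap of S exactly when i is in S,
  so the probe of S accepts the i-th word iff i is in S, and the m words are shattered.
\<close>

lemma card_le_VCdim:
  assumes "finite B" "shatters H B"
  shows "enat (card B) \<le> VCdim H"
  unfolding VCdim_def using assms by (intro Sup_upper) blast

lemma card_le_VCdim_if_all_subsets_realized:
  assumes "finite I"
    and realized: "\<And>S. S \<subseteq> I \<Longrightarrow> \<exists>f\<in>H. \<forall>i\<in>I. f (x i) \<longleftrightarrow> i \<in> S"
  shows "enat (card I) \<le> VCdim H"
proof -
  have "inj_on x I"
  proof (rule inj_onI)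
    fix i j
    assume "i \<in> I" "j \<in> I" "x i = x j"
    from \<open>i \<in> I\<close> have "{i} \<subseteq> I"
      by simp
    from realized[OF this] obtain f where f: "\<forall>l\<in>I. f (x l) \<longleftrightarrow> l \<in> {i}"
      by blast
    from f \<open>i \<in> I\<close> have "f (x i)"
      by simp
    with f \<open>j \<in> I\<close> \<open>x i = x j\<close> show "i = j"
      by simp
  qed
  then have "card (x ` I) = card I"
    by (rule card_image)
  moreover have "shatters H (x ` I)"
    unfolding shatters_def
  proof (intro allI impI)
    fix B'
    assume "B' \<subseteq> x ` I"
    obtain f where "f \<in> H" "\<forall>i\<in>I. f (x i) \<longleftrightarrow> i \<in> {i \<in> I. x i \<in> B'}"
      using realized[of "{i \<in> I. x i \<in> B'}"] by auto
    with \<open>B' \<subseteq> x ` I\<close> have "x ` I \<inter> {y. f y} = B'"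
      by auto
    with \<open>f \<in> H\<close> show "\<exists>f\<in>H. x ` I \<inter> {y. f y} = B'"
      by blast
  qed
  moreover have "finite (x ` I)"
    using \<open>finite I\<close> by simp
  ultimately show ?thesis
    using card_le_VCdim by metis
qed

lemma two_power_card_le_card_if_shatters:
  assumes "finite H" "finite B" "shatters H B"
  shows "2 ^ card B \<le> card H"
proof -
  obtain F where F: "\<And>B'. B' \<subseteq> B \<Longrightarrow> F B' \<in> H \<and> B \<inter> {x. F B' x} = B'"
    using \<open>shatters H B\<close> unfolding shatters_def by metis
  have "inj_on F (Pow B)"
    by (rule inj_onI) (metis F PowD)
  moreover have "F ` Pow B \<subseteq> H"
    using F by auto
  ultimately have "card (Pow B) \<le> card H"
    using \<open>finite H\<close> by (rule card_inj_on_le)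
  then show ?thesis
    using \<open>finite B\<close> by (simp add: card_Pow)
qed

lemma VCdim_le_if_card_le:
  assumes "finite H" "card H \<le> 2 ^ n"
  shows "VCdim H \<le> enat n"
  unfolding VCdim_def
proof (rule Sup_least, clarify)
  fix B :: "'a set"
  assume "finite B" "shatters H B"
  then have "(2::nat) ^ card B \<le> 2 ^ n"
    using assms two_power_card_le_card_if_shatters by (metis order_trans)
  then show "enat (card B) \<le> enat n"
    by simp
qed

lemma finite_Hk: "finite (Hk k)"
  and card_Hk_le: "card (Hk k) \<le> 2 ^ k"
proof -
  have Hk_eq: "Hk k = h ` {\<sigma>. set \<sigma> \<subseteq> UNIV \<and> length \<sigma> = k}"
    unfolding Hk_def by auto
  have "finite {\<sigma>::bool list. set \<sigma> \<subseteq> UNIV \<and> length \<sigma> = k}"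
    by (rule finite_lists_length_eq) simp
  then show "finite (Hk k)"
    unfolding Hk_eq by simp
  have "card (Hk k) \<le> card {\<sigma>::bool list. set \<sigma> \<subseteq> UNIV \<and> length \<sigma> = k}"
    unfolding Hk_eq by (rule card_image_le) fact
  also have "\<dots> = 2 ^ k"
    by (subst card_lists_length_eq) (auto simp: card_UNIV_bool)
  finally show "card (Hk k) \<le> 2 ^ k" .
qed

lemma VCdim_Hk_le: "VCdim (Hk k) \<le> enat k"
  using finite_Hk card_Hk_le by (rule VCdim_le_if_card_le)

fun gap_word :: "nat set \<Rightarrow> nat \<Rightarrow> bool list" where
  "gap_word T 0 = (if 0 \<in> T then [True] else [])"
| "gap_word T (Suc n) = (if 0 \<in> T then [True] else []) @ False # gap_word {a. Suc a \<in> T} n"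

definition probe_word :: "nat \<Rightarrow> nat \<Rightarrow> bool list" where
  "probe_word n a = replicate a False @ True # replicate (n - a) False"

lemma filter_Not_gap_word: "filter Not (gap_word T n) = replicate n False"
  by (induction n arbitrary: T) auto

lemma probe_word_Suc_Suc: "probe_word (Suc n) (Suc a) = False # probe_word n a"
  by (simp add: probe_word_def)

lemma not_subseq_probe_word_gap_word:
  assumes "a \<le> m" "n < m"
  shows "\<not> subseq (probe_word m a) (gap_word T n)"
proof
  assume "subseq (probe_word m a) (gap_word T n)"
  then have "subseq (filter Not (probe_word m a)) (filter Not (gap_word T n))"
    by (rule subseq_filter)
  then have "length (filter Not (probe_word m a)) \<le> n"
    using list_emb_length by (fastforce simp: filter_Not_gap_word)
  with assms show False
    by (simp add: probe_word_def)
qed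

lemma subseq_probe_word_gap_word_iff:
  "a \<le> n \<Longrightarrow> subseq (probe_word n a) (gap_word T n) \<longleftrightarrow> a \<in> T"
proof (induction n arbitrary: T a)
  case 0
  then show ?case
    by (simp add: probe_word_def)
next
  case (Suc n)
  let ?T = "{a. Suc a \<in> T}"
  have too_many_zeros: "\<not> subseq (probe_word (Suc n) a) (gap_word ?T n)"
    using Suc.prems by (simp add: not_subseq_probe_word_gap_word)
  show ?case
  proof (cases a)
    case 0
    have "subseq (replicate n False) (gap_word ?T n)"
      by (metis filter_Not_gap_word subseq_filter_left)
    then show ?thesis
      using 0 too_many_zeros by (simp add: probe_word_def)
  next
    case (Suc a')
    then show ?thesis
      using too_many_zeros Suc.IH[of a' ?T] Suc.prems by (auto simp: probe_word_Suc_Suc)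
  qed
qed

lemma VCdim_Hk_ge:
  assumes "2 ^ m \<le> k"
  shows "enat m \<le> VCdim (Hk k)"
proof -
  have "card (Pow {..<m}) \<le> card {..<k}"
    using assms by (simp add: card_Pow)
  then obtain gap where gap: "gap ` Pow {..<m} \<subseteq> {..<k}" "inj_on gap (Pow {..<m})"
    using card_le_inj[of "Pow {..<m}" "{..<k}"] by auto
  define word where "word i = gap_word {gap S | S. S \<subseteq> {..<m} \<and> i \<in> S} (k - 1)" for i
  have "\<exists>f\<in>Hk k. \<forall>i\<in>{..<m}. f (word i) \<longleftrightarrow> i \<in> S" if "S \<subseteq> {..<m}" for S
  proof
    have "gap S \<in> {..<k}"
      using gap(1) that by blast
    then have "gap S \<le> k - 1"
      by simp
    moreover have "gap S \<in> {gap S' | S'. S' \<subseteq> {..<m} \<and> i \<in> S'} \<longleftrightarrow> i \<in> S" for i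
      using gap(2) that by (blast dest: inj_onD)
    ultimately show "\<forall>i\<in>{..<m}. h (probe_word (k - 1) (gap S)) (word i) \<longleftrightarrow> i \<in> S"
      unfolding h_def word_def by (simp add: subseq_probe_word_gap_word_iff)
    have "length (probe_word (k - 1) (gap S)) = k"
      using \<open>gap S \<in> {..<k}\<close> by (simp add: probe_word_def)
    then show "h (probe_word (k - 1) (gap S)) \<in> Hk k"
      unfolding Hk_def by auto
  qed
  then have "enat (card {..<m}) \<le> VCdim (Hk k)"
    by (intro card_le_VCdim_if_all_subsets_realized finite_lessThan)
  then show ?thesis
    by simp
qed

theorem mainTheorem11:
  fixes k :: nat
  assumes "k > 1"
  shows "enat (nat \<lfloor>log 2 (real k - 1)\<rfloor>) \<le> VCdim (Hk k) \<and> VCdim (Hk k) \<le> enat k"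
proof
  have "2 ^ nat \<lfloor>log 2 (real k - 1)\<rfloor> \<le> real k - 1"
    using assms by (intro power_of_nat_log_le) auto
  then have "(2::real) ^ nat \<lfloor>log 2 (real k - 1)\<rfloor> \<le> real k"
    by linarith
  then have "2 ^ nat \<lfloor>log 2 (real k - 1)\<rfloor> \<le> k"
    by (metis of_nat_le_iff of_nat_numeral of_nat_power)
  then show "enat (nat \<lfloor>log 2 (real k - 1)\<rfloor>) \<le> VCdim (Hk k)"
    by (rule VCdim_Hk_ge)
  show "VCdim (Hk k) \<le> enat k"
    by (rule VCdim_Hk_le)
qed

end
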